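(* Consider the interleaved updating scheme in which, for every round $k$, agent $i$ and micro-step $j\in\{0,\dots,K_i-1\}$, the update is $\pi^i_{k,j+1}\in\arg\max_{\hat\pi^i}F_{k,i,j}(\hat\pi^i)$ (maximum over all policies of agent $i$, assumed attained). Then every micro-step satisfies $F_{k,i,j}(\pi^i_{k,j+1})\ge 0$, and for every round $k$, $J(\pi_{k+1})\ge J(\pi_k)$.
   Context: Cooperative Markov game $\langle \mathcal N,\mathcal S,\mathcal A,r,P,d\rangle$ with agents $\mathcal N=[n]=\{1,\dots,n\}$, finite state space $\mathcal S$, finite per-agent action spaces $\mathcal A^i$, joint action space $\mathcal A=\prod_i\mathcal A^i$, bounded joint reward $r:\mathcal S\times\mathcal A\to\mathbb R$, transition kernel $P(\cdot\mid s,a)$, initial distribution $d$, discount $\gamma\in[0,1)$. A policy of agent $i$ is a map $\pi^i(\cdot\mid s)\in\Delta(\mathcal A^i)$; a joint policy $\pi=(\pi^i)_i$ acts by $\pi(a\mid s)=\prod_i\pi^i(a^i\mid s)$; write $a=(a^{-i},a^i)$, $\pi^{-i}=(\pi^r)_{r\ne i}$. Return: $J(\pi)=\mathbb E_\pi[\sum_{t\ge0}\gamma^t r(s_t,a_t)]$ with $s_0\sim d$, $a_t\sim\pi(\cdot\mid s_t)$, $s_{t+1}\sim P(\cdot\mid s_t,a_t)$. Value $V_\pi(s)$ and action value $Q_\pi(s,a)$ are the expected discounted returns conditioned on $s_0=s$ (resp. $s_0=s,a_0=a$); joint advantage $A_\pi(s,a)=Q_\pi(s,a)-V_\pi(s)$.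 Single-agent advantage: $Q^i_\pi(s,a^i)=\mathbb E_{a^{-i}\sim\pi^{-i}(\cdot\mid s)}[Q_\pi(s,(a^{-i},a^i))]$, $A^i_\pi(s,a^i)=Q^i_\pi(s,a^i)-V_\pi(s)$. Discounted state visitation: $\rho_\pi(s)=\sum_{t\ge0}\gamma^t\Pr_\pi(s_t=s)$. Interleaved scheme: rounds $k=0,1,2,\dots$; $\pi_k=(\pi^i_k)_i$ is the joint policy at the start of round $k$ ($\pi_0$ arbitrary). Within round $k$ agents are processed in order $i=1,\dots,n$; agent $i$ performs $K_i\ge1$ micro-steps $j=0,\dots,K_i-1$ producing iterates $\pi^i_{k,0}=\pi^i_k,\pi^i_{k,1},\dots,\pi^i_{k,K_i}$, and then $\pi^i_{k+1}:=\pi^i_{k,K_i}$. Complement policy: $\tau^{-i}_k:=(\{\pi^r_{k+1}\}_{r<i},\{\pi^r_k\}_{r>i})$; baseline joint policy $\Pi_{k,i,j}:=(\tau^{-i}_k,\pi^i_{k,j})$. Surrogate: for a policy $\hat\pi^i$ of agent $i$, $L^i_{\Pi_{k,i,j}}(\tau^{-i}_k,\hat\pi^i):=\sum_{s}\rho_{\Pi_{k,i,j}}(s)\sum_{a^i}\hat\pi^i(a^i\mid s)\,A^i_{\Pi_{k,i,j}}(s,a^i)$. Constants: $\varepsilon_{k,i,j}=\max_{s,a}|A_{\Pi_{k,i,j}}(s,a)|$, $C_{k,i,j}=\frac{4\gamma\varepsilon_{k,i,j}}{(1-\gamma)^2}$. Max conditional KL: $D^{\max}_{\mathrm{KL}}(\mu,\nu)=\sup_s\mathrm{KL}(\mu(\cdot\mid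 s)\,\|\,\nu(\cdot\mid s))$. Micro-step objective: $F_{k,i,j}(\hat\pi^i):=L^i_{\Pi_{k,i,j}}(\tau^{-i}_k,\hat\pi^i)-C_{k,i,j}\,D^{\max}_{\mathrm{KL}}(\pi^i_{k,j},\hat\pi^i)$. *)

theory Defs
  imports "HOL-Analysis.Analysis"
begin

text \<open>Agents are 1..n; agent i has action set A i
(a subset of a common action type 'a).
P s a s' is the transition probability, r s a the joint reward, d the
initial distribution, g the discount factor.\<close>

definition is_policy :: "'a set \<Rightarrow> ('s \<Rightarrow> 'a \<Rightarrow> real) \<Rightarrow> bool" where
  "is_policy Ai p \<longleftrightarrow>
     (\<forall>s. (\<forall>x\<in>Ai. 0 \<le> p s x) \<and> (\<forall>x. x \<notin> Ai \<longrightarrow> p s x = 0) \<and> (\<Sum>x\<in>Ai. p s x) = 1)"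

definition joint_actions :: "nat \<Rightarrow> (nat \<Rightarrow> 'a set) \<Rightarrow> (nat \<Rightarrow> 'a) set" where
  "joint_actions n A = PiE {1..n} A"

definition joint_prob :: "nat \<Rightarrow> (nat \<Rightarrow> 's \<Rightarrow> 'a \<Rightarrow> real) \<Rightarrow> 's \<Rightarrow> (nat \<Rightarrow> 'a) \<Rightarrow> real" where
  "joint_prob n pol s a = (\<Prod>i\<in>{1..n}. pol i s (a i))"

fun state_dist :: "nat \<Rightarrow> (nat \<Rightarrow> 'a set) \<Rightarrow> ('s::finite \<Rightarrow> (nat \<Rightarrow> 'a) \<Rightarrow> 's \<Rightarrow> real)
    \<Rightarrow> (nat \<Rightarrow> 's \<Rightarrow> 'a \<Rightarrow> real) \<Rightarrow> ('s \<Rightarrow> real) \<Rightarrow> nat \<Rightarrow> 's \<Rightarrow> real" where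
  "state_dist n A P pol d0 0 = d0"
| "state_dist n A P pol d0 (Suc t) =
     (\<lambda>s'. \<Sum>s\<in>UNIV. state_dist n A P pol d0 t s *
              (\<Sum>a\<in>joint_actions n A. joint_prob n pol s a * P s a s'))"

definition ret :: "nat \<Rightarrow> (nat \<Rightarrow> 'a set) \<Rightarrow> ('s::finite \<Rightarrow> (nat \<Rightarrow> 'a) \<Rightarrow> 's \<Rightarrow> real)
    \<Rightarrow> ('s \<Rightarrow> (nat \<Rightarrow> 'a) \<Rightarrow> real) \<Rightarrow> real \<Rightarrow> ('s \<Rightarrow> real)
    \<Rightarrow> (nat \<Rightarrow> 's \<Rightarrow> 'a \<Rightarrow> real) \<Rightarrow> real" where
  "ret n A P r g d0 pol =
     (\<Sum>t. g ^ t * (\<Sum>s\<in>UNIV. state_dist n A P pol d0 t s *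
                      (\<Sum>a\<in>joint_actions n A. joint_prob n pol s a * r s a)))"

definition Jret where
  "Jret n A P r g d pol = ret n A P r g d pol"

definition Vf where
  "Vf n A P r g pol s = ret n A P r g (\<lambda>s'. if s' = s then 1 else 0) pol"

definition Qf where
  "Qf n A P r g pol s a = r s a + g * (\<Sum>s'\<in>UNIV. P s a s' * Vf n A P r g pol s')"

definition Af where
  "Af n A P r g pol s a = Qf n A P r g pol s a - Vf n A P r g pol s"

definition Qi where
  "Qi n A P r g pol i s x =
     (\<Sum>b\<in>PiE ({1..n} - {i}) A. (\<Prod>j\<in>{1..n} - {i}. pol j s (b j)) *
         Qf n A P r g pol s (b(i := x)))"

definition Ai_adv where
  "Ai_adv n A P r g pol i s x = Qi n A P r g pol i s x - Vf n A P r g pol s"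

definition rho where
  "rho n A P g d pol s = (\<Sum>t. g ^ t * state_dist n A P pol d t s)"

definition surrogate where
  "surrogate n A P r g d Pol i pih =
     (\<Sum>s\<in>UNIV. rho n A P g d Pol s * (\<Sum>x\<in>A i. pih s x * Ai_adv n A P r g Pol i s x))"

definition eps_adv where
  "eps_adv n A P r g Pol =
     Max ((\<lambda>(s, a). \<bar>Af n A P r g Pol s a\<bar>) ` (UNIV \<times> joint_actions n A))"

definition Cconst where
  "Cconst n A P r g Pol = 4 * g * eps_adv n A P r g Pol / (1 - g) ^ 2"

definition kl_term :: "real \<Rightarrow> real \<Rightarrow> ereal" where
  "kl_term p q = (if p = 0 then 0 else if q = 0 then \<infinity> else ereal (p * ln (p / q)))"

definition KL :: "'a set \<Rightarrow> ('s \<Rightarrow> 'a \<Rightarrow> real) \<Rightarrow> ('s \<Rightarrow> 'a \<Rightarrow> real) \<Rightarrow> 's \<Rightarrow> ereal" where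
  "KL Ai mu nu s = (\<Sum>x\<in>Ai. kl_term (mu s x) (nu s x))"

definition DmaxKL :: "'a set \<Rightarrow> ('s \<Rightarrow> 'a \<Rightarrow> real) \<Rightarrow> ('s \<Rightarrow> 'a \<Rightarrow> real) \<Rightarrow> ereal" where
  "DmaxKL Ai mu nu = (SUP s. KL Ai mu nu s)"

text \<open>Baseline joint policy Pi_{k,i,j} = (tau^{-i}_k, pi^i_{k,j}):
  agents r < i use pol (Suc k) r, agent i uses it k i j, agents r > i use pol k r.\<close>
definition baseline where
  "baseline pol it k i j = (\<lambda>r. if r < i then pol (Suc k) r else if r = i then it k i j else pol k r)"

text \<open>Micro-step objective F_{k,i,j}(pih) (extended real, since the KL may be infinite).\<close>
definition Fobj where
  "Fobj n A P r g d pol it k i j pih =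
     (let Pol = baseline pol it k i j in
       ereal (surrogate n A P r g d Pol i pih)
       - ereal (Cconst n A P r g Pol) * DmaxKL (A i) (it k i j) pih)"

end

theory Submission
  imports Defs
begin

(*
  Each micro-step maximises F, and the current iterate already attains F = 0: its surrogate is the
  expected advantage of a policy under its own actions, and the KL penalty vanishes. Hence the
  maximiser has F >= 0.

  F is a lower bound for the gain in return obtained by replacing agent i's policy in the baseline
  joint policy. This is the bound J(pi') - J(pi) >= L_pi(pi') - C alpha^2 of trust-region policy
  optimisation: by the performance difference lemma J(pi') - J(pi) is the discounted sum of expected
  advantages along the trajectory of pi', and replacing that trajectory by the one of pi costs at
  most t*alpha at time t, where alpha bounds the L1 distance of the joint action distributions.
  If only agent i changes, that distance equals the L1 distance of agent i's distributions, which
  is controlled by their KL divergence through the Hellinger distance.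

  So every micro-step does not decrease the return, and chaining the micro-steps of all agents of
  a round gives J(pi_{k+1}) >= J(pi_k).
*)

definition is_dist :: "('s::finite \<Rightarrow> real) \<Rightarrow> bool" where
  "is_dist d0 \<longleftrightarrow> (\<forall>s. 0 \<le> d0 s) \<and> sum d0 UNIV = 1"

lemma is_dist_point_mass: "is_dist (\<lambda>x. if x = s0 then 1 else 0)"
  by (simp add: is_dist_def)

lemma is_dist_le_1: "is_dist d0 \<Longrightarrow> d0 s \<le> 1"
  unfolding is_dist_def using member_le_sum[of s UNIV d0] by auto

lemma abs_expectation_le:
  assumes "is_dist D" and "\<And>s. \<bar>f s\<bar> \<le> B"
  shows "\<bar>\<Sum>s\<in>UNIV. D s * f s\<bar> \<le> B"
proof -
  have "\<bar>\<Sum>s\<in>UNIV. D s * f s\<bar> \<le> (\<Sum>s\<in>UNIV. \<bar>D s * f s\<bar>)" by (rule sum_abs)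
  also have "\<dots> \<le> (\<Sum>s\<in>UNIV. D s * B)"
    using assms by (intro sum_mono) (auto simp: is_dist_def abs_mult intro: mult_left_mono)
  also have "\<dots> = B" using assms(1) by (simp add: is_dist_def sum_distrib_right[symmetric])
  finally show ?thesis .
qed

lemma sum_point_mass_mult:
  "(\<Sum>x\<in>(UNIV::'s::finite set). (if x = s then 1 else 0) * f x) = (f s :: real)"
proof -
  have "(\<Sum>x\<in>(UNIV::'s set). (if x = s then 1 else 0) * f x) = (\<Sum>x\<in>UNIV. if x = s then f x else 0)"
    by (rule sum.cong) auto
  then show ?thesis by simp
qed

lemma sums_nat_mult_power:
  fixes x :: real
  assumes "\<bar>x\<bar> < 1"
  shows "(\<lambda>t. real t * x^t) sums (x / (1-x)^2)"
proof -
  have "(\<lambda>t. of_nat (Suc t) * x^t) sums (1 / (1-x)^2)"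
    by (rule geometric_deriv_sums) (use assms in simp)
  from sums_mult[OF this, of x]
  have "(\<lambda>t. real (Suc t) * x^(Suc t)) sums (x / (1-x)^2)" by (simp add: mult_ac)
  then show ?thesis using sums_Suc_iff[of "\<lambda>t. real t * x^t"] by simp
qed

section \<open>KL divergence and L1 distance\<close>

lemma hellinger_term_le_kl_term:
  fixes p q :: real
  assumes p: "0 \<le> p" and q: "0 \<le> q" and fin: "p \<noteq> 0 \<longrightarrow> q \<noteq> 0"
  shows "2 * p - 2 * (sqrt p * sqrt q) \<le> (if p = 0 then 0 else p * ln (p / q))"
proof (cases "p = 0")
  case True then show ?thesis by simp
next
  case False
  then have pp: "0 < p" using p by simp
  have qq: "0 < q" using fin False q by simp
  define u where "u = sqrt q / sqrt p"
  have u: "0 < u" using pp qq by (simp add: u_def)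
  have "ln u = (ln q - ln p) / 2"
    using pp qq by (simp add: u_def ln_divide_pos ln_sqrt diff_divide_distrib)
  then have ln_pq: "ln (p / q) = - 2 * ln u" using pp qq by (simp add: ln_divide_pos)
  have "p * (2 - 2 * u) \<le> p * (- 2 * ln u)"
    using pp ln_le_minus_one[OF u] by (intro mult_left_mono) auto
  moreover have "p * u = sqrt p * sqrt q"
    using pp by (simp add: u_def field_simps)
  ultimately show ?thesis using False ln_pq by (simp add: algebra_simps)
qed

lemma hellinger_le_kl:
  fixes p q :: "'x \<Rightarrow> real"
  assumes "\<forall>x\<in>X. 0 \<le> p x" and "\<forall>x\<in>X. 0 \<le> q x" and "\<forall>x\<in>X. p x \<noteq> 0 \<longrightarrow> q x \<noteq> 0"
    and "(\<Sum>x\<in>X. p x) = 1" and "(\<Sum>x\<in>X. q x) = 1"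
  shows "(\<Sum>x\<in>X. (sqrt (q x) - sqrt (p x))^2) \<le> (\<Sum>x\<in>X. if p x = 0 then 0 else p x * ln (p x / q x))"
proof -
  have "(\<Sum>x\<in>X. (sqrt (q x) - sqrt (p x))^2)
      = (\<Sum>x\<in>X. 2 * p x - 2 * (sqrt (p x) * sqrt (q x))) + ((\<Sum>x\<in>X. q x) - (\<Sum>x\<in>X. p x))"
    using assms(1,2)
    by (simp add: sum_subtractf sum.distrib[symmetric] power2_eq_square algebra_simps cong: sum.cong)
  also have "\<dots> = (\<Sum>x\<in>X. 2 * p x - 2 * (sqrt (p x) * sqrt (q x)))" using assms(4,5) by simp
  also have "\<dots> \<le> (\<Sum>x\<in>X. if p x = 0 then 0 else p x * ln (p x / q x))"
    using assms(1-3) by (intro sum_mono hellinger_term_le_kl_term) auto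
  finally show ?thesis .
qed

lemma l1_dist_sq_le_hellinger:
  fixes p q :: "'x \<Rightarrow> real"
  assumes "\<forall>x\<in>X. 0 \<le> p x" and "\<forall>x\<in>X. 0 \<le> q x"
    and "(\<Sum>x\<in>X. p x) = 1" and "(\<Sum>x\<in>X. q x) = 1"
  shows "(\<Sum>x\<in>X. \<bar>q x - p x\<bar>)^2 \<le> 4 * (\<Sum>x\<in>X. (sqrt (q x) - sqrt (p x))^2)"
proof -
  let ?m = "\<lambda>x. sqrt (q x) - sqrt (p x)" and ?M = "\<lambda>x. sqrt (q x) + sqrt (p x)"
  have "\<bar>q x - p x\<bar> = \<bar>?m x\<bar> * ?M x" if "x \<in> X" for x
  proof -
    have "q x - p x = ?m x * ?M x" using assms(1,2) that by (simp add: algebra_simps)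
    moreover have "0 \<le> ?M x" using assms(1,2) that by simp
    ultimately show ?thesis by (simp add: abs_mult)
  qed
  then have "(\<Sum>x\<in>X. \<bar>q x - p x\<bar>)^2 = (\<Sum>x\<in>X. \<bar>?m x\<bar> * ?M x)^2"
    by (simp cong: sum.cong)
  also have "\<dots> \<le> (\<Sum>x\<in>X. \<bar>?m x\<bar>^2) * (\<Sum>x\<in>X. (?M x)^2)"
    by (rule Cauchy_Schwarz_ineq_sum)
  also have "\<dots> \<le> (\<Sum>x\<in>X. (?m x)^2) * 4"
    unfolding power2_abs
  proof (intro mult_left_mono)
    have "(?M x)^2 \<le> 2 * (q x + p x)" if "x \<in> X" for x
    proof -
      have "(?M x)^2 + (?m x)^2 = 2 * (q x + p x)"
        using assms(1,2) that by (simp add: power2_eq_square algebra_simps)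
      then show ?thesis by (smt (verit) zero_le_power2)
    qed
    then have "(\<Sum>x\<in>X. (?M x)^2) \<le> (\<Sum>x\<in>X. 2 * (q x + p x))" by (rule sum_mono)
    also have "\<dots> = 4" using assms(3,4) by (simp add: sum.distrib sum_distrib_left[symmetric])
    finally show "(\<Sum>x\<in>X. (?M x)^2) \<le> 4" .
  qed (auto intro: sum_nonneg)
  finally show ?thesis by (simp add: mult.commute)
qed

lemma l1_dist_sq_le_KL:
  fixes p q :: "'x \<Rightarrow> real"
  assumes X: "finite X" and "\<forall>x\<in>X. 0 \<le> p x" and "\<forall>x\<in>X. 0 \<le> q x"
    and "(\<Sum>x\<in>X. p x) = 1" and "(\<Sum>x\<in>X. q x) = 1"
  shows "ereal ((\<Sum>x\<in>X. \<bar>q x - p x\<bar>)^2 / 4) \<le> (\<Sum>x\<in>X. kl_term (p x) (q x))"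
proof (cases "\<exists>x\<in>X. p x \<noteq> 0 \<and> q x = 0")
  case True
  then have "(\<Sum>x\<in>X. kl_term (p x) (q x)) = \<infinity>"
    using X by (subst sum_Pinfty) (auto simp: kl_term_def)
  then show ?thesis by simp
next
  case False
  then have "kl_term (p x) (q x) = ereal (if p x = 0 then 0 else p x * ln (p x / q x))" if "x \<in> X" for x
    using that by (auto simp: kl_term_def)
  then have "(\<Sum>x\<in>X. kl_term (p x) (q x)) = ereal (\<Sum>x\<in>X. if p x = 0 then 0 else p x * ln (p x / q x))"
    by (simp add: sum_ereal[symmetric] del: sum_ereal cong: sum.cong)
  moreover have "(\<Sum>x\<in>X. \<bar>q x - p x\<bar>)^2 / 4 \<le> (\<Sum>x\<in>X. if p x = 0 then 0 else p x * ln (p x / q x))"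
  proof -
    have "\<forall>x\<in>X. p x \<noteq> 0 \<longrightarrow> q x \<noteq> 0" using False by blast
    then show ?thesis
      using l1_dist_sq_le_hellinger[OF assms(2-5)] hellinger_le_kl[OF assms(2,3) _ assms(4,5)]
      by linarith
  qed
  ultimately show ?thesis by simp
qed

lemma DmaxKL_self: "DmaxKL X p p = 0"
proof -
  have "kl_term (p s x) (p s x) = 0" for s x by (simp add: kl_term_def)
  then show ?thesis unfolding DmaxKL_def KL_def by simp
qed

section \<open>Returns of a Markov game\<close>

lemma Jret_cong:
  assumes "\<And>j. j \<in> {1..n} \<Longrightarrow> pol1 j = pol2 j"
  shows "Jret n A P r g d pol1 = Jret n A P r g d pol2"
proof -
  have jp: "joint_prob n pol1 = joint_prob n pol2"
    using assms by (auto simp: joint_prob_def intro!: ext prod.cong)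
  have "state_dist n A P pol1 d t = state_dist n A P pol2 d t" for t
    by (induction t) (simp_all add: jp)
  then show ?thesis by (simp add: Jret_def ret_def jp)
qed

locale markov_game =
  fixes n :: nat and A :: "nat \<Rightarrow> 'a set"
    and P :: "'s::finite \<Rightarrow> (nat \<Rightarrow> 'a) \<Rightarrow> 's \<Rightarrow> real"
    and r :: "'s \<Rightarrow> (nat \<Rightarrow> 'a) \<Rightarrow> real" and g :: real
  assumes finite_actions: "i \<in> {1..n} \<Longrightarrow> finite (A i)"
    and actions_nonempty: "i \<in> {1..n} \<Longrightarrow> A i \<noteq> {}"
    and P_nonneg: "a \<in> joint_actions n A \<Longrightarrow> 0 \<le> P s a s'"
    and P_sum: "a \<in> joint_actions n A \<Longrightarrow> (\<Sum>s'\<in>UNIV. P s a s') = 1"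
    and discount_nonneg: "0 \<le> g" and discount_less_1: "g < 1"
begin

abbreviation "Acts \<equiv> joint_actions n A"
abbreviation "sdist pol \<equiv> state_dist n A P pol"
abbreviation "V pol \<equiv> Vf n A P r g pol"
abbreviation "Adv pol \<equiv> Af n A P r g pol"
abbreviation "eps pol \<equiv> eps_adv n A P r g pol"

definition "trans_pol pol s s' = (\<Sum>a\<in>Acts. joint_prob n pol s a * P s a s')"
definition "reward_pol pol s = (\<Sum>a\<in>Acts. joint_prob n pol s a * r s a)"
definition "is_joint_dist pol \<longleftrightarrow>
  (\<forall>s. (\<forall>a\<in>Acts. 0 \<le> joint_prob n pol s a) \<and> (\<Sum>a\<in>Acts. joint_prob n pol s a) = 1)"

lemma finite_Acts: "finite Acts"
  unfolding joint_actions_def using finite_actions by (auto intro!: finite_PiE)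

lemma Acts_nonempty: "Acts \<noteq> {}"
  using actions_nonempty by (auto simp: joint_actions_def PiE_eq_empty_iff)

lemma joint_prob_nonneg: "is_joint_dist pol \<Longrightarrow> a \<in> Acts \<Longrightarrow> 0 \<le> joint_prob n pol s a"
  by (auto simp: is_joint_dist_def)

lemma sum_joint_prob: "is_joint_dist pol \<Longrightarrow> (\<Sum>a\<in>Acts. joint_prob n pol s a) = 1"
  by (auto simp: is_joint_dist_def)

lemma joint_prob_le_1: "is_joint_dist pol \<Longrightarrow> a \<in> Acts \<Longrightarrow> joint_prob n pol s a \<le> 1"
  using member_le_sum[of a Acts "joint_prob n pol s"] finite_Acts
  by (auto simp: is_joint_dist_def)

lemma state_dist_Suc: "sdist pol d0 (Suc t) s' = (\<Sum>s\<in>UNIV. sdist pol d0 t s * trans_pol pol s s')"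
  by (simp add: trans_pol_def)

lemma trans_pol_nonneg: "is_joint_dist pol \<Longrightarrow> 0 \<le> trans_pol pol s s'"
  unfolding trans_pol_def by (intro sum_nonneg mult_nonneg_nonneg joint_prob_nonneg P_nonneg) auto

lemma sum_trans_pol: "is_joint_dist pol \<Longrightarrow> (\<Sum>s'\<in>UNIV. trans_pol pol s s') = 1"
proof -
  assume j: "is_joint_dist pol"
  have "(\<Sum>s'\<in>UNIV. trans_pol pol s s') = (\<Sum>a\<in>Acts. joint_prob n pol s a * (\<Sum>s'\<in>UNIV. P s a s'))"
    unfolding trans_pol_def sum_distrib_left by (rule sum.swap)
  then show ?thesis using sum_joint_prob[OF j] by (simp add: P_sum)
qed

lemma is_dist_trans_pol: "is_joint_dist pol \<Longrightarrow> is_dist (trans_pol pol s)"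
  by (simp add: is_dist_def trans_pol_nonneg sum_trans_pol)

lemma is_dist_state_dist: "is_joint_dist pol \<Longrightarrow> is_dist d0 \<Longrightarrow> is_dist (sdist pol d0 t)"
proof (induction t)
  case 0 then show ?case by simp
next
  case (Suc t)
  then have ih: "is_dist (sdist pol d0 t)" by simp
  have "(\<Sum>s'\<in>UNIV. sdist pol d0 (Suc t) s') = (\<Sum>s\<in>UNIV. sdist pol d0 t s * (\<Sum>s'\<in>UNIV. trans_pol pol s s'))"
    unfolding state_dist_Suc sum_distrib_left by (rule sum.swap)
  also have "\<dots> = 1" using sum_trans_pol[OF Suc.prems(1)] ih by (simp add: is_dist_def)
  finally show ?case
    unfolding is_dist_def state_dist_Suc using ih Suc.prems
    by (auto intro!: sum_nonneg mult_nonneg_nonneg trans_pol_nonneg simp: is_dist_def)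
qed

lemma state_dist_linear:
  "sdist pol d0 t s' = (\<Sum>s0\<in>UNIV. d0 s0 * sdist pol (\<lambda>x. if x = s0 then 1 else 0) t s')"
proof (induction t arbitrary: s')
  case 0 then show ?case by (simp add: if_distrib cong: if_cong)
next
  case (Suc t)
  have "sdist pol d0 (Suc t) s' = (\<Sum>s\<in>UNIV. (\<Sum>s0\<in>UNIV. d0 s0 * sdist pol (\<lambda>x. if x = s0 then 1 else 0) t s) * trans_pol pol s s')"
    unfolding state_dist_Suc using Suc by simp
  also have "\<dots> = (\<Sum>s0\<in>UNIV. d0 s0 * sdist pol (\<lambda>x. if x = s0 then 1 else 0) (Suc t) s')"
    unfolding state_dist_Suc sum_distrib_left sum_distrib_right mult.assoc by (rule sum.swap)
  finally show ?case .
qed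

lemma state_dist_Suc_shift:
  "sdist pol d0 (Suc t) = sdist pol (\<lambda>s'. \<Sum>s\<in>UNIV. d0 s * trans_pol pol s s') t"
proof (induction t)
  case 0 then show ?case by (simp add: trans_pol_def)
next
  case (Suc t)
  show ?case by (rule ext) (simp only: state_dist_Suc[of pol d0 "Suc t"] Suc state_dist_Suc[of pol _ t])
qed

lemma abs_reward_pol_le:
  assumes "is_joint_dist pol"
  shows "\<bar>reward_pol pol s\<bar> \<le> (\<Sum>s\<in>UNIV. \<Sum>a\<in>Acts. \<bar>r s a\<bar>)"
proof -
  have "\<bar>reward_pol pol s\<bar> \<le> (\<Sum>a\<in>Acts. \<bar>joint_prob n pol s a * r s a\<bar>)"
    unfolding reward_pol_def by (rule sum_abs)
  also have "\<dots> \<le> (\<Sum>a\<in>Acts. \<bar>r s a\<bar>)"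
  proof (intro sum_mono)
    fix a assume "a \<in> Acts"
    then show "\<bar>joint_prob n pol s a * r s a\<bar> \<le> \<bar>r s a\<bar>"
      using joint_prob_nonneg[OF assms] joint_prob_le_1[OF assms]
      by (simp add: abs_mult mult_left_le_one_le)
  qed
  also have "\<dots> \<le> (\<Sum>s\<in>UNIV. \<Sum>a\<in>Acts. \<bar>r s a\<bar>)"
    by (rule member_le_sum[where f = "\<lambda>s. \<Sum>a\<in>Acts. \<bar>r s a\<bar>"]) (auto intro: sum_nonneg)
  finally show ?thesis .
qed

lemma summable_discounted: "(\<And>t. \<bar>X t\<bar> \<le> B) \<Longrightarrow> summable (\<lambda>t. g^t * X t)"
proof -
  assume X: "\<And>t. \<bar>X t\<bar> \<le> B"
  have "summable (\<lambda>t. B * g^t)"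
    using discount_nonneg discount_less_1 by (intro summable_mult summable_geometric) auto
  moreover have "norm (g^t * X t) \<le> B * g^t" for t
    using X[of t] discount_nonneg by (simp add: abs_mult mult.commute[of _ "g^t"] mult_left_mono)
  ultimately show ?thesis by (rule summable_comparison_test')
qed

lemma ret_eq: "ret n A P r g d0 pol = (\<Sum>t. g^t * (\<Sum>s\<in>UNIV. sdist pol d0 t s * reward_pol pol s))"
  by (simp add: ret_def reward_pol_def)

lemma summable_ret:
  "is_joint_dist pol \<Longrightarrow> is_dist d0 \<Longrightarrow>
    summable (\<lambda>t. g^t * (\<Sum>s\<in>UNIV. sdist pol d0 t s * reward_pol pol s))"
  by (rule summable_discounted, rule abs_expectation_le, rule is_dist_state_dist, assumption+,
      rule abs_reward_pol_le)

lemma ret_eq_expected_V: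
  assumes j: "is_joint_dist pol"
  shows "ret n A P r g d0 pol = (\<Sum>s0\<in>UNIV. d0 s0 * V pol s0)"
proof -
  let ?f = "\<lambda>s0 t. d0 s0 * (g^t * (\<Sum>s\<in>UNIV. sdist pol (\<lambda>x. if x = s0 then 1 else 0) t s * reward_pol pol s))"
  have "g^t * (\<Sum>s\<in>UNIV. sdist pol d0 t s * reward_pol pol s) = (\<Sum>s0\<in>UNIV. ?f s0 t)" for t
    by (subst state_dist_linear, unfold sum_distrib_left sum_distrib_right, subst sum.swap) (simp add: mult_ac)
  then have "ret n A P r g d0 pol = (\<Sum>t. \<Sum>s0\<in>UNIV. ?f s0 t)" by (simp add: ret_eq)
  also have "\<dots> = (\<Sum>s0\<in>UNIV. \<Sum>t. ?f s0 t)"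
    by (rule suminf_sum) (intro summable_mult summable_ret[OF j is_dist_point_mass])
  also have "\<dots> = (\<Sum>s0\<in>UNIV. d0 s0 * V pol s0)"
    unfolding Vf_def ret_eq by (intro sum.cong refl suminf_mult summable_ret[OF j is_dist_point_mass])
  finally show ?thesis .
qed

lemma bellman:
  assumes j: "is_joint_dist pol"
  shows "V pol s = reward_pol pol s + g * (\<Sum>s'\<in>UNIV. trans_pol pol s s' * V pol s')"
proof -
  let ?d = "\<lambda>x. if x = s then 1 else (0::real)"
  let ?X = "\<lambda>t. g^t * (\<Sum>s''\<in>UNIV. sdist pol ?d t s'' * reward_pol pol s'')"
  have "V pol s = ?X 0 + (\<Sum>t. ?X (Suc t))"
    using suminf_split_head[OF summable_ret[OF j is_dist_point_mass]] by (simp add: Vf_def ret_eq)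
  also have "?X 0 = reward_pol pol s"
    using sum_point_mass_mult[of s "reward_pol pol"] by simp
  also have "(\<Sum>t. ?X (Suc t)) = g * ret n A P r g (trans_pol pol s) pol"
  proof -
    have "(\<lambda>s'. \<Sum>x\<in>UNIV. ?d x * trans_pol pol x s') = trans_pol pol s"
      by (rule ext) (rule sum_point_mass_mult)
    then have "?X (Suc t) = g * (g^t * (\<Sum>s''\<in>UNIV. sdist pol (trans_pol pol s) t s'' * reward_pol pol s''))" for t
      by (simp only: state_dist_Suc_shift power_Suc mult.assoc)
    then show ?thesis
      unfolding ret_eq by (simp only:) (intro suminf_mult summable_ret[OF j] is_dist_trans_pol[OF j])
  qed
  also have "ret n A P r g (trans_pol pol s) pol = (\<Sum>s'\<in>UNIV. trans_pol pol s s' * V pol s')"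
    by (rule ret_eq_expected_V[OF j])
  finally show ?thesis .
qed

abbreviation "exp_adv pol1 pol2 s \<equiv> (\<Sum>a\<in>Acts. joint_prob n pol2 s a * Adv pol1 s a)"

lemma exp_adv_eq:
  assumes "is_joint_dist pol2"
  shows "exp_adv pol1 pol2 s = reward_pol pol2 s + g * (\<Sum>s'\<in>UNIV. trans_pol pol2 s s' * V pol1 s') - V pol1 s"
proof -
  have "exp_adv pol1 pol2 s
      = (\<Sum>a\<in>Acts. joint_prob n pol2 s a * r s a
            + g * (\<Sum>s'\<in>UNIV. joint_prob n pol2 s a * P s a s' * V pol1 s')
            - joint_prob n pol2 s a * V pol1 s)"
    unfolding Af_def Qf_def by (intro sum.cong refl) (simp add: algebra_simps sum_distrib_left)
  also have "\<dots> = reward_pol pol2 s + g * (\<Sum>a\<in>Acts. \<Sum>s'\<in>UNIV. joint_prob n pol2 s a * P s a s' * V pol1 s')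
        - (\<Sum>a\<in>Acts. joint_prob n pol2 s a) * V pol1 s"
    by (simp add: sum.distrib sum_subtractf sum_distrib_left sum_distrib_right reward_pol_def)
  also have "(\<Sum>a\<in>Acts. \<Sum>s'\<in>UNIV. joint_prob n pol2 s a * P s a s' * V pol1 s')
      = (\<Sum>s'\<in>UNIV. trans_pol pol2 s s' * V pol1 s')"
    unfolding trans_pol_def sum_distrib_right by (rule sum.swap)
  finally show ?thesis using sum_joint_prob[OF assms] by simp
qed

lemma exp_adv_self:
  assumes "is_joint_dist pol"
  shows "exp_adv pol pol s = 0"
  using exp_adv_eq[OF assms] bellman[OF assms, of s] by simp

lemma performance_difference:
  assumes j1: "is_joint_dist pol1" and j2: "is_joint_dist pol2" and d: "is_dist d0"
  shows "(\<lambda>t. g^t * (\<Sum>s\<in>UNIV. sdist pol2 d0 t s * exp_adv pol1 pol2 s))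
           sums (ret n A P r g d0 pol2 - ret n A P r g d0 pol1)"
proof -
  let ?x = "\<lambda>t. \<Sum>s\<in>UNIV. sdist pol2 d0 t s * V pol1 s"
  let ?Y = "\<lambda>t. g^t * (\<Sum>s\<in>UNIV. sdist pol2 d0 t s * reward_pol pol2 s)"
  have telescope: "g^t * (\<Sum>s\<in>UNIV. sdist pol2 d0 t s * exp_adv pol1 pol2 s)
      = ?Y t + (g^(Suc t) * ?x (Suc t) - g^t * ?x t)" for t
  proof -
    have adv: "(\<Sum>s\<in>UNIV. sdist pol2 d0 t s * exp_adv pol1 pol2 s)
       = (\<Sum>s\<in>UNIV. sdist pol2 d0 t s * reward_pol pol2 s)
         + g * (\<Sum>s\<in>UNIV. sdist pol2 d0 t s * (\<Sum>s'\<in>UNIV. trans_pol pol2 s s' * V pol1 s')) - ?x t"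
      unfolding exp_adv_eq[OF j2] by (simp add: algebra_simps sum.distrib sum_subtractf sum_distrib_left)
    have next_step: "(\<Sum>s\<in>UNIV. sdist pol2 d0 t s * (\<Sum>s'\<in>UNIV. trans_pol pol2 s s' * V pol1 s')) = ?x (Suc t)"
      unfolding state_dist_Suc sum_distrib_left sum_distrib_right mult.assoc by (rule sum.swap)
    show ?thesis unfolding adv next_step by (simp add: algebra_simps)
  qed
  have Y_sums: "?Y sums ret n A P r g d0 pol2"
    unfolding ret_eq by (rule summable_sums, rule summable_ret[OF j2 d])
  have "(\<lambda>t. g^t * ?x t) \<longlonglongrightarrow> 0"
  proof (rule Lim_null_comparison)
    have "\<bar>V pol1 s\<bar> \<le> (\<Sum>s\<in>UNIV. \<bar>V pol1 s\<bar>)" for s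
      by (rule member_le_sum) auto
    then show "\<forall>\<^sub>F t in sequentially. norm (g^t * ?x t) \<le> g^t * (\<Sum>s\<in>UNIV. \<bar>V pol1 s\<bar>)"
      using abs_expectation_le[OF is_dist_state_dist[OF j2 d]] discount_nonneg
      by (intro always_eventually allI) (auto simp: abs_mult intro!: mult_left_mono)
    show "(\<lambda>t. g^t * (\<Sum>s\<in>UNIV. \<bar>V pol1 s\<bar>)) \<longlonglongrightarrow> 0"
      using discount_nonneg discount_less_1 by (intro tendsto_mult_left_zero LIMSEQ_power_zero) simp
  qed
  from telescope_sums[OF this]
  have tel_sums: "(\<lambda>t. g^(Suc t) * ?x (Suc t) - g^t * ?x t) sums (0 - g^0 * ?x 0)" .
  have "?x 0 = ret n A P r g d0 pol1" using ret_eq_expected_V[OF j1] by simp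
  then show ?thesis unfolding telescope using sums_add[OF Y_sums tel_sums] by simp
qed

definition "act_l1_dist pol1 pol2 s = (\<Sum>a\<in>Acts. \<bar>joint_prob n pol2 s a - joint_prob n pol1 s a\<bar>)"

lemma act_l1_dist_nonneg: "0 \<le> act_l1_dist pol1 pol2 s"
  unfolding act_l1_dist_def by (rule sum_nonneg) simp

lemma abs_Adv_le_eps: "a \<in> Acts \<Longrightarrow> \<bar>Adv pol s a\<bar> \<le> eps pol"
  unfolding eps_adv_def
  by (rule Max_ge) (auto simp: finite_Acts intro!: image_eqI[where x="(s,a)"])

lemma eps_nonneg: "0 \<le> eps pol"
proof -
  obtain a where "a \<in> Acts" using Acts_nonempty by auto
  then show ?thesis using abs_Adv_le_eps[of a pol undefined] by linarith
qed

lemma abs_exp_adv_le: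
  assumes j1: "is_joint_dist pol1"
  shows "\<bar>exp_adv pol1 pol2 s\<bar> \<le> act_l1_dist pol1 pol2 s * eps pol1"
proof -
  have "exp_adv pol1 pol2 s = exp_adv pol1 pol2 s - exp_adv pol1 pol1 s"
    using exp_adv_self[OF j1] by simp
  also have "\<dots> = (\<Sum>a\<in>Acts. (joint_prob n pol2 s a - joint_prob n pol1 s a) * Adv pol1 s a)"
    by (simp add: sum_subtractf left_diff_distrib)
  finally have "\<bar>exp_adv pol1 pol2 s\<bar>
      \<le> (\<Sum>a\<in>Acts. \<bar>(joint_prob n pol2 s a - joint_prob n pol1 s a) * Adv pol1 s a\<bar>)"
    using sum_abs by simp
  also have "\<dots> \<le> (\<Sum>a\<in>Acts. \<bar>joint_prob n pol2 s a - joint_prob n pol1 s a\<bar> * eps pol1)"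
    by (intro sum_mono) (auto simp: abs_mult intro!: mult_left_mono abs_Adv_le_eps)
  also have "\<dots> = act_l1_dist pol1 pol2 s * eps pol1" by (simp add: act_l1_dist_def sum_distrib_right)
  finally show ?thesis .
qed

lemma trans_pol_l1_diff_le:
  "(\<Sum>s'\<in>UNIV. \<bar>trans_pol pol2 s s' - trans_pol pol1 s s'\<bar>) \<le> act_l1_dist pol1 pol2 s"
proof -
  let ?\<delta> = "\<lambda>a. joint_prob n pol2 s a - joint_prob n pol1 s a"
  have "\<bar>trans_pol pol2 s s' - trans_pol pol1 s s'\<bar> \<le> (\<Sum>a\<in>Acts. \<bar>?\<delta> a\<bar> * P s a s')" for s'
  proof -
    have "\<bar>trans_pol pol2 s s' - trans_pol pol1 s s'\<bar> = \<bar>\<Sum>a\<in>Acts. ?\<delta> a * P s a s'\<bar>"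
      by (simp add: trans_pol_def sum_subtractf left_diff_distrib)
    also have "\<dots> \<le> (\<Sum>a\<in>Acts. \<bar>?\<delta> a * P s a s'\<bar>)" by (rule sum_abs)
    finally show ?thesis by (simp add: abs_mult P_nonneg)
  qed
  then have "(\<Sum>s'\<in>UNIV. \<bar>trans_pol pol2 s s' - trans_pol pol1 s s'\<bar>)
     \<le> (\<Sum>s'\<in>UNIV. \<Sum>a\<in>Acts. \<bar>?\<delta> a\<bar> * P s a s')"
    by (rule sum_mono)
  also have "\<dots> = (\<Sum>a\<in>Acts. \<bar>?\<delta> a\<bar> * (\<Sum>s'\<in>UNIV. P s a s'))"
    unfolding sum_distrib_left by (rule sum.swap)
  also have "\<dots> = act_l1_dist pol1 pol2 s"
    unfolding act_l1_dist_def by (intro sum.cong refl) (simp add: P_sum)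
  finally show ?thesis .
qed

lemma abs_state_dist_Suc_diff_le:
  assumes j1: "is_joint_dist pol1" and j2: "is_joint_dist pol2" and d: "is_dist d0"
  shows "\<bar>sdist pol2 d0 (Suc t) s' - sdist pol1 d0 (Suc t) s'\<bar>
    \<le> (\<Sum>s\<in>UNIV. \<bar>sdist pol2 d0 t s - sdist pol1 d0 t s\<bar> * trans_pol pol2 s s')
      + (\<Sum>s\<in>UNIV. sdist pol1 d0 t s * \<bar>trans_pol pol2 s s' - trans_pol pol1 s s'\<bar>)"
proof -
  let ?e = "\<lambda>s. sdist pol2 d0 t s - sdist pol1 d0 t s"
  have "sdist pol2 d0 (Suc t) s' - sdist pol1 d0 (Suc t) s'
     = (\<Sum>s\<in>UNIV. sdist pol2 d0 t s * trans_pol pol2 s s' - sdist pol1 d0 t s * trans_pol pol1 s s')"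
    unfolding state_dist_Suc by (simp add: sum_subtractf)
  also have "\<dots> = (\<Sum>s\<in>UNIV. ?e s * trans_pol pol2 s s')
      + (\<Sum>s\<in>UNIV. sdist pol1 d0 t s * (trans_pol pol2 s s' - trans_pol pol1 s s'))"
    unfolding sum.distrib[symmetric] by (intro sum.cong refl) (simp add: algebra_simps)
  finally have split: "sdist pol2 d0 (Suc t) s' - sdist pol1 d0 (Suc t) s' = \<dots>" .
  have "\<bar>\<Sum>s\<in>UNIV. ?e s * trans_pol pol2 s s'\<bar> \<le> (\<Sum>s\<in>UNIV. \<bar>?e s * trans_pol pol2 s s'\<bar>)"
    by (rule sum_abs)
  also have "\<dots> = (\<Sum>s\<in>UNIV. \<bar>?e s\<bar> * trans_pol pol2 s s')"
    by (intro sum.cong refl) (simp add: abs_mult trans_pol_nonneg[OF j2])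
  finally have first: "\<bar>\<Sum>s\<in>UNIV. ?e s * trans_pol pol2 s s'\<bar> \<le> \<dots>" .
  have "\<bar>\<Sum>s\<in>UNIV. sdist pol1 d0 t s * (trans_pol pol2 s s' - trans_pol pol1 s s')\<bar>
      \<le> (\<Sum>s\<in>UNIV. \<bar>sdist pol1 d0 t s * (trans_pol pol2 s s' - trans_pol pol1 s s')\<bar>)"
    by (rule sum_abs)
  also have "\<dots> = (\<Sum>s\<in>UNIV. sdist pol1 d0 t s * \<bar>trans_pol pol2 s s' - trans_pol pol1 s s'\<bar>)"
    using is_dist_state_dist[OF j1 d] by (intro sum.cong refl) (simp add: abs_mult is_dist_def)
  finally have second: "\<bar>\<Sum>s\<in>UNIV. sdist pol1 d0 t s * (trans_pol pol2 s s' - trans_pol pol1 s s')\<bar> \<le> \<dots>" .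
  show ?thesis unfolding split using first second by linarith
qed

lemma state_dist_l1_diff_le:
  assumes j1: "is_joint_dist pol1" and j2: "is_joint_dist pol2" and d: "is_dist d0"
    and D: "\<And>s. act_l1_dist pol1 pol2 s \<le> D"
  shows "(\<Sum>s\<in>UNIV. \<bar>sdist pol2 d0 t s - sdist pol1 d0 t s\<bar>) \<le> real t * D"
proof (induction t)
  case 0 then show ?case by simp
next
  case (Suc t)
  let ?e = "\<lambda>s. \<bar>sdist pol2 d0 t s - sdist pol1 d0 t s\<bar>"
  let ?dM = "\<lambda>s s'. \<bar>trans_pol pol2 s s' - trans_pol pol1 s s'\<bar>"
  have D1: "is_dist (sdist pol1 d0 t)" by (rule is_dist_state_dist[OF j1 d])
  have "(\<Sum>s'\<in>UNIV. \<bar>sdist pol2 d0 (Suc t) s' - sdist pol1 d0 (Suc t) s'\<bar>)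
      \<le> (\<Sum>s'\<in>UNIV. (\<Sum>s\<in>UNIV. ?e s * trans_pol pol2 s s') + (\<Sum>s\<in>UNIV. sdist pol1 d0 t s * ?dM s s'))"
    by (intro sum_mono abs_state_dist_Suc_diff_le[OF j1 j2 d])
  also have "\<dots> = (\<Sum>s\<in>UNIV. ?e s * (\<Sum>s'\<in>UNIV. trans_pol pol2 s s'))
      + (\<Sum>s\<in>UNIV. sdist pol1 d0 t s * (\<Sum>s'\<in>UNIV. ?dM s s'))"
    unfolding sum.distrib sum_distrib_left by (rule arg_cong2[where f = "(+)"]; rule sum.swap)
  also have "\<dots> \<le> (\<Sum>s\<in>UNIV. ?e s) + (\<Sum>s\<in>UNIV. sdist pol1 d0 t s * D)"
    using sum_trans_pol[OF j2] D1
    by (intro add_mono sum_mono)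
       (auto simp: is_dist_def intro!: mult_left_mono order_trans[OF trans_pol_l1_diff_le D])
  also have "\<dots> \<le> real t * D + D"
    using Suc.IH D1 by (simp add: sum_distrib_right[symmetric] is_dist_def)
  finally show ?case by (simp add: algebra_simps)
qed

lemma rho_expectation_sums:
  assumes j: "is_joint_dist pol" and d: "is_dist d0"
  shows "(\<lambda>t. g^t * (\<Sum>s\<in>UNIV. sdist pol d0 t s * f s)) sums (\<Sum>s\<in>UNIV. rho n A P g d0 pol s * f s)"
proof -
  have sm: "summable (\<lambda>t. g^t * sdist pol d0 t s)" for s
    by (rule summable_discounted[where B=1])
       (use is_dist_state_dist[OF j d] is_dist_le_1[OF is_dist_state_dist[OF j d]] in \<open>auto simp: is_dist_def\<close>)
  have "(\<lambda>t. \<Sum>s\<in>UNIV. g^t * sdist pol d0 t s * f s) sums (\<Sum>s\<in>UNIV. \<Sum>t. g^t * sdist pol d0 t s * f s)"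
    by (intro sums_sum summable_sums summable_mult2 sm)
  moreover have "(\<Sum>t. g^t * sdist pol d0 t s * f s) = rho n A P g d0 pol s * f s" for s
    unfolding rho_def by (intro suminf_mult2[symmetric] sm)
  ultimately show ?thesis by (simp add: sum_distrib_left mult.assoc)
qed

lemma abs_state_dist_diff_exp_adv_le:
  assumes j1: "is_joint_dist pol1" and j2: "is_joint_dist pol2" and d: "is_dist d0"
    and D: "\<And>s. act_l1_dist pol1 pol2 s \<le> D"
  shows "\<bar>\<Sum>s\<in>UNIV. (sdist pol2 d0 t s - sdist pol1 d0 t s) * exp_adv pol1 pol2 s\<bar>
    \<le> real t * D^2 * eps pol1"
proof -
  have D_nonneg: "0 \<le> D" using D[of undefined] act_l1_dist_nonneg[of pol1 pol2 undefined] by linarith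
  have "\<bar>\<Sum>s\<in>UNIV. (sdist pol2 d0 t s - sdist pol1 d0 t s) * exp_adv pol1 pol2 s\<bar>
      \<le> (\<Sum>s\<in>UNIV. \<bar>sdist pol2 d0 t s - sdist pol1 d0 t s\<bar> * \<bar>exp_adv pol1 pol2 s\<bar>)"
    using sum_abs[of "\<lambda>s. (sdist pol2 d0 t s - sdist pol1 d0 t s) * exp_adv pol1 pol2 s" UNIV]
    by (simp add: abs_mult)
  also have "\<dots> \<le> (\<Sum>s\<in>UNIV. \<bar>sdist pol2 d0 t s - sdist pol1 d0 t s\<bar> * (D * eps pol1))"
  proof (intro sum_mono mult_left_mono)
    show "\<bar>exp_adv pol1 pol2 s\<bar> \<le> D * eps pol1" for s
      using abs_exp_adv_le[OF j1, of pol2 s] mult_right_mono[OF D[of s] eps_nonneg[of pol1]] by linarith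
  qed simp
  also have "\<dots> = (\<Sum>s\<in>UNIV. \<bar>sdist pol2 d0 t s - sdist pol1 d0 t s\<bar>) * (D * eps pol1)"
    by (simp add: sum_distrib_right)
  also have "\<dots> \<le> (real t * D) * (D * eps pol1)"
    using D_nonneg eps_nonneg
    by (intro mult_right_mono state_dist_l1_diff_le[OF j1 j2 d D]) simp
  finally show ?thesis by (simp add: power2_eq_square mult_ac)
qed

text \<open>Theorem 1 of trust-region policy optimisation (Schulman et al. 2015); \<open>D\<close> bounds the L1
  distance, i.e. twice the total variation distance, of the joint action distributions.\<close>

lemma return_gain_lower_bound:
  assumes j1: "is_joint_dist pol1" and j2: "is_joint_dist pol2" and d: "is_dist d0"
    and D: "\<And>s. act_l1_dist pol1 pol2 s \<le> D"
  shows "(\<Sum>s\<in>UNIV. rho n A P g d0 pol1 s * exp_adv pol1 pol2 s) - D^2 * eps pol1 * (g / (1-g)^2)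
      \<le> ret n A P r g d0 pol2 - ret n A P r g d0 pol1"
proof -
  let ?L = "\<Sum>s\<in>UNIV. rho n A P g d0 pol1 s * exp_adv pol1 pol2 s"
  let ?c = "D^2 * eps pol1"
  let ?X = "\<lambda>pol t. g^t * (\<Sum>s\<in>UNIV. sdist pol d0 t s * exp_adv pol1 pol2 s)"
  have diff_sums: "(\<lambda>t. ?X pol2 t - ?X pol1 t) sums (ret n A P r g d0 pol2 - ret n A P r g d0 pol1 - ?L)"
    by (rule sums_diff[OF performance_difference[OF j1 j2 d] rho_expectation_sums[OF j1 d]])
  have bound_sums: "(\<lambda>t. - (real t * g^t * ?c)) sums (- (g / (1-g)^2 * ?c))"
    using discount_nonneg discount_less_1 by (intro sums_minus sums_mult2 sums_nat_mult_power) simp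
  have termwise: "- (real t * g^t * ?c) \<le> ?X pol2 t - ?X pol1 t" for t
  proof -
    let ?Y = "\<Sum>s\<in>UNIV. (sdist pol2 d0 t s - sdist pol1 d0 t s) * exp_adv pol1 pol2 s"
    have "- (real t * ?c) \<le> ?Y"
      using abs_state_dist_diff_exp_adv_le[OF j1 j2 d D, of t] by (simp add: mult.assoc)
    then have "g^t * - (real t * ?c) \<le> g^t * ?Y"
      using discount_nonneg by (intro mult_left_mono) simp_all
    moreover have "?X pol2 t - ?X pol1 t = g^t * ?Y"
      by (simp add: right_diff_distrib[symmetric] sum_subtractf[symmetric] left_diff_distrib)
    ultimately show ?thesis by (simp add: mult_ac)
  qed
  have "- (g / (1-g)^2 * ?c) \<le> ret n A P r g d0 pol2 - ret n A P r g d0 pol1 - ?L"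
    by (rule sums_le[OF termwise bound_sums diff_sums])
  then show ?thesis by (simp add: mult_ac)
qed

section \<open>Changing the policy of a single agent\<close>

abbreviation "joint_policy pl \<equiv> \<forall>j\<in>{1..n}. is_policy (A j) (pl j)"
abbreviation "others_prob pl i s b \<equiv> (\<Prod>j\<in>{1..n}-{i}. pl j s (b j))"

lemma sum_joint_actions_split:
  assumes i: "i \<in> {1..n}"
  shows "(\<Sum>a\<in>Acts. f a) = (\<Sum>x\<in>A i. \<Sum>b\<in>PiE ({1..n}-{i}) A. f (b(i:=x)))"
proof -
  let ?I = "{1..n} - {i}"
  have "Acts = PiE (insert i ?I) A" using i by (simp add: joint_actions_def insert_absorb)
  also have "\<dots> = (\<lambda>(y,g). g(i:=y)) ` (A i \<times> PiE ?I A)" by (rule PiE_insert_eq)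
  finally have e: "Acts = (\<lambda>(y,g). g(i:=y)) ` (A i \<times> PiE ?I A)" .
  have inj: "inj_on (\<lambda>(y,g). g(i:=y)) (A i \<times> PiE ?I A)" by (rule inj_combinator) simp
  have "(\<Sum>a\<in>Acts. f a) = (\<Sum>(y,g)\<in>A i \<times> PiE ?I A. f (g(i:=y)))"
    unfolding e by (subst sum.reindex[OF inj]) (simp add: case_prod_unfold)
  also have "\<dots> = (\<Sum>x\<in>A i. \<Sum>b\<in>PiE ?I A. f (b(i:=x)))"
    by (rule sum.cartesian_product[symmetric])
  finally show ?thesis .
qed

lemma joint_prob_split:
  assumes i: "i \<in> {1..n}"
  shows "joint_prob n pl s (b(i:=x)) = pl i s x * others_prob pl i s b"
proof -
  have "joint_prob n pl s (b(i:=x)) = pl i s x * (\<Prod>j\<in>{1..n}-{i}. pl j s ((b(i:=x)) j))"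
    unfolding joint_prob_def using i by (subst prod.remove[of "{1..n}" i]) auto
  also have "(\<Prod>j\<in>{1..n}-{i}. pl j s ((b(i:=x)) j)) = others_prob pl i s b"
    by (intro prod.cong refl) auto
  finally show ?thesis .
qed

lemma joint_prob_policy_upd:
  assumes i: "i \<in> {1..n}"
  shows "joint_prob n (pl(i:=pih)) s (b(i:=x)) = pih s x * others_prob pl i s b"
proof -
  have "others_prob (pl(i:=pih)) i s b = others_prob pl i s b" by (intro prod.cong refl) auto
  then show ?thesis using joint_prob_split[OF i, of "pl(i:=pih)"] by simp
qed

lemma sum_others_prob:
  assumes "joint_policy pl"
  shows "(\<Sum>b\<in>PiE ({1..n}-{i}) A. others_prob pl i s b) = 1"
proof -
  have "(\<Sum>b\<in>PiE ({1..n}-{i}) A. others_prob pl i s b) = (\<Prod>j\<in>{1..n}-{i}. \<Sum>x\<in>A j. pl j s x)"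
    by (rule prod_sum_PiE[symmetric]) (use finite_actions in auto)
  also have "\<dots> = 1" using assms by (intro prod.neutral) (auto simp: is_policy_def)
  finally show ?thesis .
qed

lemma others_prob_nonneg:
  assumes "joint_policy pl" and "b \<in> PiE ({1..n}-{i}) A"
  shows "0 \<le> others_prob pl i s b"
  using assms by (intro prod_nonneg) (auto simp: is_policy_def PiE_mem)

lemma is_joint_dist_if_joint_policy:
  assumes "joint_policy pl"
  shows "is_joint_dist pl"
  unfolding is_joint_dist_def
proof (intro allI conjI ballI)
  fix s a assume "a \<in> Acts"
  then show "0 \<le> joint_prob n pl s a"
    unfolding joint_prob_def using assms
    by (intro prod_nonneg) (auto simp: is_policy_def joint_actions_def PiE_mem)
next
  fix s
  have "(\<Sum>a\<in>Acts. joint_prob n pl s a) = (\<Prod>j\<in>{1..n}. \<Sum>x\<in>A j. pl j s x)"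
    unfolding joint_actions_def joint_prob_def
    by (rule prod_sum_PiE[symmetric]) (use finite_actions in auto)
  also have "\<dots> = 1" using assms by (intro prod.neutral) (auto simp: is_policy_def)
  finally show "(\<Sum>a\<in>Acts. joint_prob n pl s a) = 1" .
qed

lemma agent_adv_expectation_eq_exp_adv:
  assumes pl: "joint_policy pl" and i: "i \<in> {1..n}"
  shows "(\<Sum>x\<in>A i. pih s x * Ai_adv n A P r g pl i s x) = exp_adv pl (pl(i:=pih)) s"
proof -
  let ?B = "PiE ({1..n}-{i}) A"
  have "(\<Sum>b\<in>?B. joint_prob n (pl(i:=pih)) s (b(i:=x)) * Adv pl s (b(i:=x)))
      = pih s x * Ai_adv n A P r g pl i s x" for x
  proof -
    have "(\<Sum>b\<in>?B. joint_prob n (pl(i:=pih)) s (b(i:=x)) * Adv pl s (b(i:=x)))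
        = pih s x * ((\<Sum>b\<in>?B. others_prob pl i s b * Qf n A P r g pl s (b(i:=x)))
          - (\<Sum>b\<in>?B. others_prob pl i s b) * V pl s)"
      unfolding joint_prob_policy_upd[OF i] Af_def
      by (simp add: algebra_simps sum_distrib_left sum_subtractf sum_distrib_right)
    then show ?thesis unfolding sum_others_prob[OF pl] Ai_adv_def Qi_def by simp
  qed
  then show ?thesis by (simp add: sum_joint_actions_split[OF i])
qed

lemma act_l1_dist_policy_upd:
  assumes pl: "joint_policy pl" and i: "i \<in> {1..n}"
  shows "act_l1_dist pl (pl(i:=pih)) s = (\<Sum>x\<in>A i. \<bar>pih s x - pl i s x\<bar>)"
proof -
  let ?B = "PiE ({1..n}-{i}) A"
  have "(\<Sum>b\<in>?B. \<bar>joint_prob n (pl(i:=pih)) s (b(i:=x)) - joint_prob n pl s (b(i:=x))\<bar>)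
      = \<bar>pih s x - pl i s x\<bar>" for x
  proof -
    have "(\<Sum>b\<in>?B. \<bar>joint_prob n (pl(i:=pih)) s (b(i:=x)) - joint_prob n pl s (b(i:=x))\<bar>)
        = (\<Sum>b\<in>?B. \<bar>pih s x - pl i s x\<bar> * others_prob pl i s b)"
      unfolding joint_prob_policy_upd[OF i] joint_prob_split[OF i]
      using others_prob_nonneg[OF pl]
      by (intro sum.cong refl) (simp add: left_diff_distrib[symmetric] abs_mult)
    then show ?thesis using sum_others_prob[OF pl] by (simp add: sum_distrib_left[symmetric])
  qed
  then show ?thesis unfolding act_l1_dist_def by (simp add: sum_joint_actions_split[OF i])
qed

lemma surrogate_self:
  assumes "joint_policy pl" and "i \<in> {1..n}"
  shows "surrogate n A P r g d0 pl i (pl i) = 0"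
  using exp_adv_self[OF is_joint_dist_if_joint_policy[OF assms(1)]]
  by (simp add: surrogate_def agent_adv_expectation_eq_exp_adv[OF assms])

lemma act_l1_dist_sq_le_DmaxKL:
  assumes pl: "joint_policy pl" and i: "i \<in> {1..n}" and pih: "is_policy (A i) pih"
  shows "ereal ((act_l1_dist pl (pl(i:=pih)) s)^2 / 4) \<le> DmaxKL (A i) (pl i) pih"
proof -
  have "ereal ((act_l1_dist pl (pl(i:=pih)) s)^2 / 4) \<le> KL (A i) (pl i) pih s"
    unfolding act_l1_dist_policy_upd[OF pl i] KL_def
    by (rule l1_dist_sq_le_KL) (use pl i pih finite_actions in \<open>auto simp: is_policy_def\<close>)
  also have "\<dots> \<le> DmaxKL (A i) (pl i) pih" unfolding DmaxKL_def by (rule SUP_upper) simp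
  finally show ?thesis .
qed

lemma penalized_surrogate_le_return_gain:
  assumes pl: "joint_policy pl" and i: "i \<in> {1..n}" and pih: "is_policy (A i) pih"
    and d: "is_dist d0"
  shows "ereal (surrogate n A P r g d0 pl i pih) - ereal (Cconst n A P r g pl) * DmaxKL (A i) (pl i) pih
      \<le> ereal (Jret n A P r g d0 (pl(i:=pih)) - Jret n A P r g d0 pl)"
proof -
  let ?pl' = "pl(i:=pih)" and ?C = "Cconst n A P r g pl"
  define D where "D = Max (range (act_l1_dist pl ?pl'))"
  have D_ge: "act_l1_dist pl ?pl' s \<le> D" for s unfolding D_def by (rule Max_ge) auto
  have "D \<in> range (act_l1_dist pl ?pl')" unfolding D_def by (rule Max_in) auto
  then obtain s0 where D_eq: "D = act_l1_dist pl ?pl' s0" by auto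
  have C_nonneg: "0 \<le> ?C" unfolding Cconst_def using discount_nonneg eps_nonneg[of pl] by simp
  have "ereal (surrogate n A P r g d0 pl i pih) - ereal ?C * DmaxKL (A i) (pl i) pih
      \<le> ereal (surrogate n A P r g d0 pl i pih) - ereal ?C * ereal (D^2/4)"
    using act_l1_dist_sq_le_DmaxKL[OF pl i pih, of s0] C_nonneg
    by (intro ereal_minus_mono order_refl ereal_mult_left_mono) (simp_all add: D_eq)
  also have "\<dots> = ereal (surrogate n A P r g d0 pl i pih - D^2 * eps pl * (g / (1-g)^2))"
    unfolding Cconst_def by (simp add: field_simps)
  also have "\<dots> \<le> ereal (Jret n A P r g d0 ?pl' - Jret n A P r g d0 pl)"
    using return_gain_lower_bound[OF is_joint_dist_if_joint_policy[OF pl]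
        is_joint_dist_if_joint_policy d D_ge] pl pih
    by (simp add: surrogate_def agent_adv_expectation_eq_exp_adv[OF pl i] Jret_def)
  finally show ?thesis .
qed

end

section \<open>The interleaved scheme\<close>

locale interleaved_scheme = markov_game n A P r g
  for n :: nat and A :: "nat \<Rightarrow> 'a set" and P :: "'s::finite \<Rightarrow> (nat \<Rightarrow> 'a) \<Rightarrow> 's \<Rightarrow> real"
    and r :: "'s \<Rightarrow> (nat \<Rightarrow> 'a) \<Rightarrow> real" and g :: real +
  fixes d :: "'s \<Rightarrow> real" and pol :: "nat \<Rightarrow> nat \<Rightarrow> 's \<Rightarrow> 'a \<Rightarrow> real"
    and it :: "nat \<Rightarrow> nat \<Rightarrow> nat \<Rightarrow> 's \<Rightarrow> 'a \<Rightarrow> real" and K :: "nat \<Rightarrow> nat"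
  assumes d_dist: "is_dist d"
    and pol_0: "i \<in> {1..n} \<Longrightarrow> is_policy (A i) (pol 0 i)"
    and it_0: "i \<in> {1..n} \<Longrightarrow> it k i 0 = pol k i"
    and pol_Suc: "i \<in> {1..n} \<Longrightarrow> pol (Suc k) i = it k i (K i)"
    and is_policy_it_Suc: "i \<in> {1..n} \<Longrightarrow> j < K i \<Longrightarrow> is_policy (A i) (it k i (Suc j))"
    and it_Suc_maximal: "i \<in> {1..n} \<Longrightarrow> j < K i \<Longrightarrow> is_policy (A i) pih \<Longrightarrow>
      Fobj n A P r g d pol it k i j pih \<le> Fobj n A P r g d pol it k i j (it k i (Suc j))"
begin

abbreviation "J \<equiv> Jret n A P r g d"
abbreviation "F \<equiv> Fobj n A P r g d pol it"

lemma is_policy_pol: "i \<in> {1..n} \<Longrightarrow> is_policy (A i) (pol k i)"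
proof (induction k)
  case 0 then show ?case by (rule pol_0)
next
  case (Suc k)
  then show ?case
    using it_0 is_policy_it_Suc[of i "K i - 1" k] by (cases "K i") (simp_all add: pol_Suc)
qed

lemma is_policy_it: "i \<in> {1..n} \<Longrightarrow> j \<le> K i \<Longrightarrow> is_policy (A i) (it k i j)"
  by (cases j) (simp_all add: it_0 is_policy_pol is_policy_it_Suc)

lemma joint_policy_baseline:
  "i \<in> {1..n} \<Longrightarrow> j \<le> K i \<Longrightarrow> joint_policy (baseline pol it k i j)"
  by (simp add: baseline_def is_policy_pol is_policy_it)

lemma F_current_eq_0:
  assumes "i \<in> {1..n}" and "j \<le> K i"
  shows "F k i j (it k i j) = 0"
proof -
  have "baseline pol it k i j i = it k i j" by (simp add: baseline_def)
  then have "surrogate n A P r g d (baseline pol it k i j) i (it k i j) = 0"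
    using surrogate_self[OF joint_policy_baseline[OF assms, where k = k] assms(1), of d]
    by simp
  then show ?thesis by (simp add: Fobj_def DmaxKL_self)
qed

lemma F_update_nonneg:
  assumes "i \<in> {1..n}" and "j < K i"
  shows "0 \<le> F k i j (it k i (Suc j))"
proof -
  have "F k i j (it k i j) \<le> F k i j (it k i (Suc j))"
    using assms by (intro it_Suc_maximal is_policy_it) simp_all
  then show ?thesis using F_current_eq_0[OF assms(1), of j k] assms(2) by simp
qed

lemma J_baseline_Suc:
  assumes i: "i \<in> {1..n}" and j: "j < K i"
  shows "J (baseline pol it k i j) \<le> J (baseline pol it k i (Suc j))"
proof -
  let ?pl = "baseline pol it k i j"
  have upd: "baseline pol it k i (Suc j) = ?pl(i := it k i (Suc j))"
    by (rule ext) (simp add: baseline_def)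
  have "F k i j (it k i (Suc j))
      = ereal (surrogate n A P r g d ?pl i (it k i (Suc j)))
        - ereal (Cconst n A P r g ?pl) * DmaxKL (A i) (?pl i) (it k i (Suc j))"
    by (simp add: Fobj_def Let_def baseline_def)
  also have "\<dots> \<le> ereal (J (?pl(i := it k i (Suc j))) - J ?pl)"
    using j by (intro penalized_surrogate_le_return_gain joint_policy_baseline i is_policy_it d_dist) simp_all
  finally have "0 \<le> ereal (J (?pl(i := it k i (Suc j))) - J ?pl)"
    by (rule order_trans[OF F_update_nonneg[OF i j]])
  then show ?thesis unfolding upd by simp
qed

lemma J_baseline_next_agent:
  assumes i: "i \<in> {1..n}"
  shows "J (baseline pol it k i 0) \<le> J (baseline pol it k (Suc i) 0)"
proof -
  have "J (baseline pol it k i 0) \<le> J (baseline pol it k i j)" if "j \<le> K i" for j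
    using that
  proof (induction j)
    case (Suc j)
    then show ?case using J_baseline_Suc[OF i, of j k] by simp
  qed simp
  also have "J (baseline pol it k i (K i)) = J (baseline pol it k (Suc i) 0)"
    by (rule Jret_cong) (auto simp: baseline_def it_0 pol_Suc not_less_less_Suc_eq)
  finally show ?thesis by simp
qed

lemma J_round_mono: "J (pol k) \<le> J (pol (Suc k))"
proof -
  have chain: "J (baseline pol it k 1 0) \<le> J (baseline pol it k (Suc m) 0)" if "m \<le> n" for m
    using that
  proof (induction m)
    case (Suc m)
    then show ?case using J_baseline_next_agent[of "Suc m" k] by simp
  qed simp
  moreover have "J (pol k) = J (baseline pol it k 1 0)"
    by (rule Jret_cong) (auto simp: baseline_def it_0)
  moreover have "J (baseline pol it k (Suc n) 0) = J (pol (Suc k))"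
    by (rule Jret_cong) (auto simp: baseline_def)
  ultimately show ?thesis using chain[of n] by simp
qed

end

theorem theorem1:
  fixes n :: nat
    and A :: "nat \<Rightarrow> 'a set"
    and P :: "'s::finite \<Rightarrow> (nat \<Rightarrow> 'a) \<Rightarrow> 's \<Rightarrow> real"
    and r :: "'s \<Rightarrow> (nat \<Rightarrow> 'a) \<Rightarrow> real"
    and d :: "'s \<Rightarrow> real"
    and g :: real
    and K :: "nat \<Rightarrow> nat"
    and pol :: "nat \<Rightarrow> nat \<Rightarrow> 's \<Rightarrow> 'a \<Rightarrow> real"
    and it :: "nat \<Rightarrow> nat \<Rightarrow> nat \<Rightarrow> 's \<Rightarrow> 'a \<Rightarrow> real"
  assumes A_fin: "\<forall>i\<in>{1..n}. finite (A i) \<and> A i \<noteq> {}"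
    and P_stoch: "\<forall>s. \<forall>a\<in>joint_actions n A. (\<forall>s'. 0 \<le> P s a s') \<and> (\<Sum>s'\<in>UNIV. P s a s') = 1"
    and d_nonneg: "\<forall>s. 0 \<le> d s"
    and d_sum: "(\<Sum>s\<in>UNIV. d s) = 1"
    and g_ge: "0 \<le> g" and g_lt: "g < 1"
    and K_pos: "\<forall>i\<in>{1..n}. 1 \<le> K i"
    and pol0: "\<forall>i\<in>{1..n}. is_policy (A i) (pol 0 i)"
    and it_start: "\<forall>k. \<forall>i\<in>{1..n}. it k i 0 = pol k i"
    and pol_next: "\<forall>k. \<forall>i\<in>{1..n}. pol (Suc k) i = it k i (K i)"
    and argmax: "\<forall>k. \<forall>i\<in>{1..n}. \<forall>j<K i.
        is_policy (A i) (it k i (Suc j)) \<and>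
        (\<forall>pih. is_policy (A i) pih \<longrightarrow>
           Fobj n A P r g d pol it k i j pih \<le> Fobj n A P r g d pol it k i j (it k i (Suc j)))"
  shows "(\<forall>k. \<forall>i\<in>{1..n}. \<forall>j<K i. 0 \<le> Fobj n A P r g d pol it k i j (it k i (Suc j)))
       \<and> (\<forall>k. Jret n A P r g d (pol k) \<le> Jret n A P r g d (pol (Suc k)))"
proof -
  interpret interleaved_scheme n A P r g d pol it K
    by unfold_locales (use assms in \<open>auto simp: joint_actions_def is_dist_def\<close>)
  show ?thesis using F_update_nonneg J_round_mono by blast
qed

end
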